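(* Let $\mathcal{A}=\sum_{i=1}^r\lambda_i u_i\otimes u_i\otimes\bar u_i\otimes\bar u_i$ be a CPS tensor with $0\neq\lambda_i\in\mathbb{R}$ and $u_i\in\mathbb{C}^n$, and let $U=\{u_1,\dots,u_r\}$. If $2k_U\ge r+2$, where $k_U$ is the Kruskal rank of $U$, then $rank_{cps}(\mathcal{A})=r$, and the CPS rank decomposition of $\mathcal{A}$ is unique up to permutation of the terms and scaling of the decomposing vectors.
   Context: A tensor $\mathcal{A}\in\mathbb{C}^{n\times n\times n\times n}$ is conjugate partial-symmetric (CPS) if $\mathcal{A}_{ijkl}=\overline{\mathcal{A}_{klij}}$ and $\mathcal{A}_{ijkl}=\mathcal{A}_{jikl}=\mathcal{A}_{ijlk}$ for all indices. The CPS rank $rank_{cps}(\mathcal{A})$ is the smallest $r$ such that $\mathcal{A}=\sum_{i=1}^r\lambda_i a_i\otimes a_i\otimes\bar a_i\otimes\bar a_i$ with $\lambda_i\in\mathbb{R}$, $a_i\in\mathbb{C}^n$; such a decomposition with $r=rank_{cps}(\mathcal{A})$ terms is a CPS rank decomposition. The Kruskal rank $k_U$ of a finite set of vectors $U$ is the largest $k$ such that every subset of $k$ vectors of $U$ is linearly independent. *)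

theory Defs
  imports "HOL-Analysis.Analysis"
begin

type_synonym 'n tensor4 = "'n \<Rightarrow> 'n \<Rightarrow> 'n \<Rightarrow> 'n \<Rightarrow> complex"

definition cps_tensor :: "'n tensor4 \<Rightarrow> bool" where
  "cps_tensor A \<longleftrightarrow> (\<forall>i j k l. A i j k l = cnj (A k l i j) \<and> A i j k l = A j i k l \<and> A i j k l = A i j l k)"

definition cps_sum :: "nat \<Rightarrow> (nat \<Rightarrow> real) \<Rightarrow> (nat \<Rightarrow> complex ^ 'n) \<Rightarrow> 'n tensor4" where
  "cps_sum r lam a = (\<lambda>i j k l. \<Sum>m<r. complex_of_real (lam m) * (a m $ i) * (a m $ j) * cnj (a m $ k) * cnj (a m $ l))"

definition rank_cps :: "('n::finite) tensor4 \<Rightarrow> nat" where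
  "rank_cps A = (LEAST r. \<exists>lam a. A = cps_sum r lam a)"

definition kruskal_rank :: "nat \<Rightarrow> (nat \<Rightarrow> complex ^ 'n) \<Rightarrow> nat" where
  "kruskal_rank r u = (GREATEST k. k \<le> r \<and>
     (\<forall>S \<subseteq> {..<r}. card S = k \<longrightarrow> inj_on u S \<and> vec.independent (u ` S)))"

end

theory Submission
  imports Defs
begin

(* Contracting the tensor in its two conjugate-linear slots with x and y leaves
   sum_m lam_m conj((u_m.x)(u_m.y)) u_m (x) u_m, where u.x is the bilinear pairing. When every
   k of the u_m are independent and 2k >= r + 1, for each p there are x, y with
   (u_m.x)(u_m.y) = [m = p]; hence the squares u_p (x) u_p are independent and lie in the span
   of the squares of any decomposition of the tensor, so every decomposition has at least r
   nonzero terms. For a second decomposition with r terms the two spans of squares coincide,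
   so each v_j (x) v_j is a combination of the u_p (x) u_p. If 2k >= r + 2, any two indices can
   be separated at once, which kills all products of two coefficients: the combination has a
   single term and v_j is parallel to some u_p. A full contraction with separating x, y then
   matches the weights and shows that j |-> p is a bijection. *)

definition bdot :: "'a::field ^ 'n \<Rightarrow> 'a ^ 'n \<Rightarrow> 'a" where
  "bdot a x = (\<Sum>i\<in>UNIV. a $ i * x $ i)"

lemma linear_bdot_left: "Vector_Spaces.linear (*s) (*) (\<lambda>a. bdot a x)"
  by unfold_locales (auto simp: bdot_def algebra_simps sum.distrib sum_distrib_left)

lemma bdot_scale_left: "bdot (c *s a) x = c * bdot a x"
  by (simp add: bdot_def sum_distrib_left mult.assoc)

lemma bdot_sum_left: "bdot (\<Sum>m\<in>M. f m) x = (\<Sum>m\<in>M. bdot (f m) x)"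
  by (simp add: bdot_def sum_component sum_distrib_right) (rule sum.swap)

lemma bdot_eq_0_on_span:
  fixes S :: "('a::field ^ 'n) set"
  assumes "\<forall>w\<in>S. bdot w x = 0" "z \<in> vec.span S"
  shows "bdot z x = 0"
proof -
  interpret Vector_Spaces.linear "(*s) :: 'a \<Rightarrow> 'a ^ 'n \<Rightarrow> _" "(*)" "\<lambda>a. bdot a x"
    by (rule linear_bdot_left)
  show ?thesis using eq_0_on_span assms by blast
qed

lemma independent_dual_functional:
  fixes B :: "('a::field ^ 'n) set"
  assumes "vec.independent B" "b \<in> B"
  obtains x where "bdot b x = 1" "\<forall>c\<in>B - {b}. bdot c x = 0"
proof -
  interpret p: vector_space_pair "(*s) :: 'a \<Rightarrow> 'a ^ 'n \<Rightarrow> _" "(*) :: 'a \<Rightarrow> 'a \<Rightarrow> 'a"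
    by unfold_locales (auto simp: algebra_simps vec_eq_iff)
  obtain g where g: "Vector_Spaces.linear (*s) (*) g" "\<forall>c\<in>B. g c = (if c = b then 1 else 0)"
    using p.linear_independent_extend[OF assms(1), of "\<lambda>c. if c = b then 1 else 0"] by blast
  interpret g: Vector_Spaces.linear "(*s) :: 'a \<Rightarrow> 'a ^ 'n \<Rightarrow> _" "(*) :: 'a \<Rightarrow> 'a \<Rightarrow> 'a" g
    by (fact g(1))
  have "bdot a (\<chi> i. g (axis i 1)) = g a" for a
  proof -
    have "g a = g (\<Sum>i\<in>UNIV. a $ i *s axis i 1)" by (simp add: basis_expansion)
    then show ?thesis by (simp add: g.sum g.scale bdot_def)
  qed
  with g(2) assms(2) show thesis by (intro that[of "\<chi> i. g (axis i 1)"]) auto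
qed

definition k_independent :: "nat \<Rightarrow> (nat \<Rightarrow> 'a::field ^ 'n) \<Rightarrow> nat \<Rightarrow> bool" where
  "k_independent r u k \<longleftrightarrow>
     (\<forall>S \<subseteq> {..<r}. card S \<le> k \<longrightarrow> inj_on u S \<and> vec.independent (u ` S))"

lemma k_independent_kruskal_rank: "k_independent r u (kruskal_rank r u)"
  unfolding k_independent_def
proof (intro allI impI)
  let ?P = "\<lambda>k. k \<le> r \<and> (\<forall>S \<subseteq> {..<r}. card S = k \<longrightarrow> inj_on u S \<and> vec.independent (u ` S))"
  have "S = {}" if "S \<subseteq> {..<r}" "card S = 0" for S
    using that finite_subset by fastforce
  then have "?P 0" by (metis image_empty inj_on_empty vec.independent_empty le0)
  then have P: "?P (kruskal_rank r u)"
    unfolding kruskal_rank_def by (rule GreatestI_nat[where b = r]) simp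
  fix S assume S: "S \<subseteq> {..<r}" "card S \<le> kruskal_rank r u"
  have fS: "finite S" using S finite_subset by blast
  have "kruskal_rank r u - card S \<le> card ({..<r} - S)"
    using P S card_Diff_subset[OF fS] by (simp add: diff_le_mono)
  then obtain T where T: "T \<subseteq> {..<r} - S" "card T = kruskal_rank r u - card S" "finite T"
    by (rule obtain_subset_with_card_n)
  with S fS have "card (S \<union> T) = kruskal_rank r u"
    by (subst card_Un_disjoint) auto
  with P S T have "inj_on u (S \<union> T) \<and> vec.independent (u ` (S \<union> T))"
    by blast
  then show "inj_on u S \<and> vec.independent (u ` S)"
    by (meson Un_upper1 image_mono inj_on_subset vec.independent_mono)
qed

lemma k_independent_dual_functional:
  assumes "k_independent r u k" "p < r" "Z \<subseteq> {..<r}" "p \<notin> Z" "card Z < k"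
  obtains x where "bdot (u p) x = 1" "\<forall>m\<in>Z. bdot (u m) x = 0"
proof -
  have "finite Z" using assms(3) finite_subset by blast
  with assms have "insert p Z \<subseteq> {..<r}" "card (insert p Z) \<le> k" by auto
  with assms(1) have "inj_on u (insert p Z)" "vec.independent (u ` insert p Z)"
    unfolding k_independent_def by blast+
  moreover obtain x where "bdot (u p) x = 1" "\<forall>c\<in>u ` insert p Z - {u p}. bdot c x = 0"
    using independent_dual_functional[OF calculation(2)] by blast
  ultimately show thesis
    using assms(4) by (intro that[of x]) (auto dest: inj_on_contraD)
qed

lemma finite_split_card_le:
  assumes "card A \<le> a + b" "finite A"
  obtains A1 A2 where "A = A1 \<union> A2" "A1 \<subseteq> A" "A2 \<subseteq> A" "card A1 \<le> a" "card A2 \<le> b"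
proof -
  obtain A1 where A1: "A1 \<subseteq> A" "card A1 = min a (card A)" "finite A1"
    using obtain_subset_with_card_n[of "min a (card A)" A] by auto
  with assms have "card (A - A1) \<le> b" by (simp add: card_Diff_subset)
  with A1 show thesis by (intro that[of A1 "A - A1"]) auto
qed

definition separates :: "(nat \<Rightarrow> 'a::field ^ 'n) \<Rightarrow> nat \<Rightarrow> nat \<Rightarrow> 'a ^ 'n \<Rightarrow> 'a ^ 'n \<Rightarrow> bool" where
  "separates u r p x y \<longleftrightarrow> (\<forall>m<r. bdot (u m) x * bdot (u m) y = (if m = p then 1 else 0))"

lemma sum_separates:
  assumes "separates u r p x y" "p < r" "\<And>m. g m 0 = 0"
  shows "(\<Sum>m<r. g m (bdot (u m) x * bdot (u m) y)) = g p 1"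
proof -
  have "(\<Sum>m<r. g m (bdot (u m) x * bdot (u m) y)) = (\<Sum>m<r. if m = p then g m 1 else 0)"
    using assms(1,3) by (intro sum.cong) (auto simp: separates_def)
  with assms(2) show ?thesis by simp
qed

lemma separates_if_vanishing:
  assumes "bdot (u p) x = 1" "bdot (u p) y = 1"
    and "\<forall>m\<in>A. bdot (u m) x = 0" "\<forall>m\<in>B. bdot (u m) y = 0" "{..<r} - {p} \<subseteq> A \<union> B"
  shows "separates u r p x y"
  unfolding separates_def
proof (intro allI impI)
  fix m assume "m < r"
  show "bdot (u m) x * bdot (u m) y = (if m = p then 1 else 0)"
  proof (cases "m = p")
    case False
    with \<open>m < r\<close> assms(5) have "m \<in> A \<or> m \<in> B" by blast
    with False assms(3,4) show ?thesis by auto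
  qed (simp add: assms(1,2))
qed

lemma separating_pair_exists:
  assumes "k_independent r u k" "r + 1 \<le> 2 * k" "p < r"
  obtains x y where "separates u r p x y"
proof -
  from assms have "card ({..<r} - {p}) \<le> (k - 1) + (k - 1)" by (simp add: card_Diff_singleton)
  then obtain A B where AB: "{..<r} - {p} = A \<union> B" "A \<subseteq> {..<r} - {p}" "B \<subseteq> {..<r} - {p}"
      "card A \<le> k - 1" "card B \<le> k - 1"
    by (rule finite_split_card_le[OF _ finite_Diff[OF finite_lessThan]])
  from assms AB have card: "card A < k" "card B < k" by arith+
  note dual = k_independent_dual_functional[OF assms(1,3)]
  obtain x where x: "bdot (u p) x = 1" "\<forall>m\<in>A. bdot (u m) x = 0"
    by (rule dual[of A]) (use AB card in auto)
  obtain y where y: "bdot (u p) y = 1" "\<forall>m\<in>B. bdot (u m) y = 0"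
    by (rule dual[of B]) (use AB card in auto)
  show thesis
    by (rule that, rule separates_if_vanishing[OF x(1) y(1) x(2) y(2)]) (use AB in blast)
qed

text \<open>Splitting the indices other than \<open>p\<close>, \<open>q\<close> into two sets of size at most \<open>k - 2\<close>
  leaves room in each dual functional for one more prescribed zero.\<close>
lemma separating_cross_pairs:
  assumes "k_independent r u k" "r + 2 \<le> 2 * k" "p < r" "q < r" "p \<noteq> q"
  obtains x y x' y' where "separates u r p x y'" "separates u r q x' y"
    "\<forall>m<r. bdot (u m) x * bdot (u m) y = 0"
proof -
  from assms have "card ({..<r} - {p, q}) \<le> (k - 2) + (k - 2)" by (simp add: card_Diff_subset)
  then obtain A B where AB: "{..<r} - {p, q} = A \<union> B" "A \<subseteq> {..<r} - {p, q}" "B \<subseteq> {..<r} - {p, q}"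
      "card A \<le> k - 2" "card B \<le> k - 2"
    by (rule finite_split_card_le[OF _ finite_Diff[OF finite_lessThan]])
  have "finite A" "finite B" using AB(2,3) by (simp_all add: finite_subset)
  with assms AB have card: "card (insert q A) < k" "card (insert p B) < k" "card A < k" "card B < k"
    by (simp_all add: card_insert_if) linarith+
  from assms AB have sub: "insert q A \<subseteq> {..<r}" "insert p B \<subseteq> {..<r}" "A \<subseteq> {..<r}" "B \<subseteq> {..<r}"
    and notin: "p \<notin> insert q A" "q \<notin> insert p B" "q \<notin> A" "p \<notin> B" by auto
  note dual = k_independent_dual_functional[OF assms(1)]
  obtain x where x: "bdot (u p) x = 1" "\<forall>m\<in>insert q A. bdot (u m) x = 0"
    using dual[OF assms(3) sub(1) notin(1) card(1)] .
  obtain y where y: "bdot (u q) y = 1" "\<forall>m\<in>insert p B. bdot (u m) y = 0"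
    using dual[OF assms(4) sub(2) notin(2) card(2)] .
  obtain x' where x': "bdot (u q) x' = 1" "\<forall>m\<in>A. bdot (u m) x' = 0"
    using dual[OF assms(4) sub(3) notin(3) card(3)] .
  obtain y' where y': "bdot (u p) y' = 1" "\<forall>m\<in>B. bdot (u m) y' = 0"
    using dual[OF assms(3) sub(4) notin(4) card(4)] .
  have "separates u r p x y'"
    by (rule separates_if_vanishing[OF x(1) y'(1) x(2) y'(2)]) (use AB(1) in blast)
  moreover have "separates u r q x' y"
    by (rule separates_if_vanishing[OF x'(1) y(1) x'(2) y(2)]) (use AB(1) in blast)
  moreover have "bdot (u m) x * bdot (u m) y = 0" if "m < r" for m
  proof -
    from that AB(1) have "m \<in> insert q A \<or> m \<in> insert p B" by blast
    with x(2) y(2) show ?thesis by auto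
  qed
  ultimately show thesis by (blast intro: that)
qed

definition outer :: "'a::field ^ 'n \<Rightarrow> 'a ^ 'n \<Rightarrow> 'a ^ ('n \<times> 'n)" where
  "outer a b = (\<chi> kl. a $ fst kl * b $ snd kl)"

lemma outer_nth [simp]: "outer a b $ (k, l) = a $ k * b $ l"
  by (simp add: outer_def)

lemma bdot_outer: "bdot (outer a b) (outer x y) = bdot a x * bdot b y"
proof -
  have "bdot (outer a b) (outer x y) = (\<Sum>kl\<in>UNIV \<times> UNIV. a $ fst kl * b $ snd kl * (x $ fst kl * y $ snd kl))"
    by (simp add: bdot_def outer_def UNIV_Times_UNIV)
  also have "\<dots> = (\<Sum>k\<in>UNIV. \<Sum>l\<in>UNIV. a $ k * b $ l * (x $ k * y $ l))"
    by (simp add: sum.cartesian_product case_prod_beta)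
  also have "\<dots> = bdot a x * bdot b y"
    by (simp add: bdot_def sum_product algebra_simps)
  finally show ?thesis .
qed

lemma independent_if_biorthogonal:
  fixes f :: "nat \<Rightarrow> 'a::field ^ 'n"
  assumes dual: "\<And>p. p < r \<Longrightarrow> \<exists>z. \<forall>m<r. bdot (f m) z = (if m = p then 1 else 0)"
  shows "vec.independent (f ` {..<r})" "inj_on f {..<r}"
proof -
  show inj: "inj_on f {..<r}"
  proof (rule inj_onI)
    fix p q assume pq: "p \<in> {..<r}" "q \<in> {..<r}" "f p = f q"
    then obtain z where z: "\<forall>m<r. bdot (f m) z = (if m = p then 1 else 0)" using dual by blast
    with pq(1) have "bdot (f p) z = 1" by simp
    with pq(3) have "bdot (f q) z = 1" by simp
    moreover have "bdot (f q) z = (if q = p then 1 else 0)" using z pq(2) by blast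
    ultimately show "p = q" by (metis zero_neq_one)
  qed
  show "vec.independent (f ` {..<r})"
    unfolding vec.dependent_def
  proof clarify
    fix p assume p: "p < r" "f p \<in> vec.span (f ` {..<r} - {f p})"
    obtain z where z: "\<forall>m<r. bdot (f m) z = (if m = p then 1 else 0)" using dual p(1) by blast
    have "\<forall>w\<in>f ` {..<r} - {f p}. bdot w z = 0"
    proof
      fix w assume "w \<in> f ` {..<r} - {f p}"
      then obtain m where "m < r" "m \<noteq> p" "w = f m" by blast
      with z show "bdot w z = 0" by simp
    qed
    then have "bdot (f p) z = 0" using p(2) by (rule bdot_eq_0_on_span)
    with z p(1) show False by simp
  qed
qed

lemma outer_squares_independent:
  assumes "k_independent r u k" "r + 1 \<le> 2 * k"
  shows "vec.independent ((\<lambda>m. outer (u m) (u m)) ` {..<r})" "inj_on (\<lambda>m. outer (u m) (u m)) {..<r}"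
proof -
  have dual: "\<exists>z. \<forall>m<r. bdot (outer (u m) (u m)) z = (if m = p then 1 else 0)" if p: "p < r" for p
  proof -
    obtain x y where "separates u r p x y" using separating_pair_exists[OF assms p] .
    then show ?thesis by (intro exI[of _ "outer x y"]) (simp add: bdot_outer separates_def)
  qed
  show "vec.independent ((\<lambda>m. outer (u m) (u m)) ` {..<r})" "inj_on (\<lambda>m. outer (u m) (u m)) {..<r}"
    by (rule independent_if_biorthogonal[OF dual], assumption)+
qed

lemma outer_square_parallel:
  fixes u :: "nat \<Rightarrow> 'a::field ^ 'n"
  assumes ind: "k_independent r u k" "r + 2 \<le> 2 * k"
    and sq: "outer w w = (\<Sum>p<r. b p *s outer (u p) (u p))" and "w \<noteq> 0"
  obtains p c where "p < r" "c \<noteq> 0" "w = c *s u p"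
proof -
  have pairing: "bdot w x * bdot w y = (\<Sum>p<r. b p * (bdot (u p) x * bdot (u p) y))" for x y
    using arg_cong[OF sq, of "\<lambda>v. bdot v (outer x y)"]
    by (simp add: bdot_sum_left bdot_scale_left bdot_outer)
  have orth: "b p * b q = 0" if pq: "p < r" "q < r" "p \<noteq> q" for p q
  proof -
    obtain x y x' y' where sep: "separates u r p x y'" "separates u r q x' y"
      and zero: "\<forall>m<r. bdot (u m) x * bdot (u m) y = 0"
      using separating_cross_pairs[OF ind pq] .
    have "b p * b q = (bdot w x * bdot w y') * (bdot w x' * bdot w y)"
      using sum_separates[OF sep(1) pq(1), of "\<lambda>m s. b m * s"]
        sum_separates[OF sep(2) pq(2), of "\<lambda>m s. b m * s"] by (simp add: pairing)
    also have "\<dots> = (bdot w x * bdot w y) * (bdot w x' * bdot w y')"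
      by (simp add: ac_simps)
    also have "bdot w x * bdot w y = 0"
      unfolding pairing using zero by (intro sum.neutral) simp
    finally show ?thesis by simp
  qed
  obtain k0 where k0: "w $ k0 \<noteq> 0"
    using \<open>w \<noteq> 0\<close> by (metis vec_eq_iff zero_index)
  have entry: "w $ k * w $ l = (\<Sum>p<r. b p * (u p $ k * u p $ l))" for k l
    using arg_cong[OF sq, of "\<lambda>v. v $ (k, l)"] by (simp add: sum_component)
  from k0 have "(\<Sum>p<r. b p * (u p $ k0 * u p $ k0)) \<noteq> 0"
    by (simp flip: entry)
  then obtain p where p: "p < r" "b p \<noteq> 0"
    by (metis (no_types, lifting) lessThan_iff mult_eq_0_iff sum.neutral)
  have bq: "b q = 0" if "q < r" "q \<noteq> p" for q
    using orth[OF p(1) that(1)] that(2) p(2) by auto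
  have rank_one: "w $ k * w $ l = b p * (u p $ k * u p $ l)" for k l
  proof -
    have "w $ k * w $ l = (\<Sum>q<r. if q = p then b p * (u p $ k * u p $ l) else 0)"
      unfolding entry by (rule sum.cong) (auto simp: bq)
    with p(1) show ?thesis by simp
  qed
  define c where "c = b p * u p $ k0 / w $ k0"
  have "w = c *s u p"
    unfolding vec_eq_iff
  proof
    fix l
    have "w $ l = w $ k0 * w $ l / w $ k0" using k0 by simp
    then show "w $ l = (c *s u p) $ l" by (simp add: rank_one c_def)
  qed
  moreover from this \<open>w \<noteq> 0\<close> have "c \<noteq> 0" by auto
  ultimately show thesis by (intro that[OF p(1)])
qed

lemma cps_tensor_cps_sum: "cps_tensor (cps_sum r lam u)"
  unfolding cps_tensor_def cps_sum_def by (auto simp: algebra_simps)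

definition contract :: "'n tensor4 \<Rightarrow> complex ^ 'n \<Rightarrow> complex ^ 'n \<Rightarrow> complex ^ ('n \<times> 'n)" where
  "contract A x y = (\<chi> ij. \<Sum>k\<in>UNIV. \<Sum>l\<in>UNIV. A (fst ij) (snd ij) k l * cnj (x $ k) * cnj (y $ l))"

lemma contract_cps_sum:
  fixes v :: "nat \<Rightarrow> complex ^ 'n"
  shows "contract (cps_sum t mu v) x y =
     (\<Sum>m<t. (of_real (mu m) * cnj (bdot (v m) x * bdot (v m) y)) *s outer (v m) (v m))"
  unfolding vec_eq_iff
proof
  fix ij :: "'n \<times> 'n"
  obtain i j where ij: "ij = (i, j)" by fastforce
  let ?f = "\<lambda>m k l. of_real (mu m) * v m $ i * v m $ j * cnj (v m $ k) * cnj (v m $ l) * cnj (x $ k) * cnj (y $ l)"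
  have "contract (cps_sum t mu v) x y $ ij = (\<Sum>k\<in>UNIV. \<Sum>l\<in>UNIV. \<Sum>m<t. ?f m k l)"
    by (simp add: ij contract_def cps_sum_def sum_distrib_right)
  also have "\<dots> = (\<Sum>k\<in>UNIV. \<Sum>m<t. \<Sum>l\<in>UNIV. ?f m k l)"
    by (rule sum.cong[OF refl], rule sum.swap)
  also have "\<dots> = (\<Sum>m<t. \<Sum>k\<in>UNIV. \<Sum>l\<in>UNIV. ?f m k l)"
    by (rule sum.swap)
  also have "\<dots> = (\<Sum>m<t. (of_real (mu m) * cnj (bdot (v m) x * bdot (v m) y)) * (v m $ i * v m $ j))"
  proof (rule sum.cong[OF refl])
    fix m
    have "cnj (bdot (v m) x * bdot (v m) y) =
        (\<Sum>k\<in>UNIV. \<Sum>l\<in>UNIV. cnj (v m $ k) * cnj (x $ k) * (cnj (v m $ l) * cnj (y $ l)))"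
      by (simp add: bdot_def sum_product)
    then show "(\<Sum>k\<in>UNIV. \<Sum>l\<in>UNIV. ?f m k l) = of_real (mu m) * cnj (bdot (v m) x * bdot (v m) y) * (v m $ i * v m $ j)"
      by (simp add: sum_distrib_left sum_distrib_right algebra_simps)
  qed
  also have "\<dots> = (\<Sum>m<t. (of_real (mu m) * cnj (bdot (v m) x * bdot (v m) y)) *s outer (v m) (v m)) $ ij"
    by (simp add: ij sum_component)
  finally show "contract (cps_sum t mu v) x y $ ij = \<dots>" .
qed

lemma contract_cps_sum_value:
  fixes v :: "nat \<Rightarrow> complex ^ 'n"
  shows "bdot (contract (cps_sum t mu v) x y) (outer x y) =
     of_real (\<Sum>m<t. mu m * cmod (bdot (v m) x * bdot (v m) y) ^ 2)"
proof -
  have "bdot (contract (cps_sum t mu v) x y) (outer x y) =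
      (\<Sum>m<t. of_real (mu m) * cnj (bdot (v m) x * bdot (v m) y) * (bdot (v m) x * bdot (v m) y))"
    by (simp only: contract_cps_sum bdot_sum_left bdot_scale_left bdot_outer)
  also have "\<dots> = of_real (\<Sum>m<t. mu m * cmod (bdot (v m) x * bdot (v m) y) ^ 2)"
    unfolding of_real_sum of_real_mult complex_norm_square by (simp add: ac_simps)
  finally show ?thesis .
qed

lemma cps_sum_outer_squares_in_span:
  fixes u v :: "nat \<Rightarrow> complex ^ 'n"
  assumes ind: "k_independent r u k" "r + 1 \<le> 2 * k" and lam: "\<forall>i<r. lam i \<noteq> 0"
    and eq: "cps_sum t mu v = cps_sum r lam u"
  shows "(\<lambda>m. outer (u m) (u m)) ` {..<r} \<subseteq>
           vec.span ((\<lambda>j. outer (v j) (v j)) ` {j. j < t \<and> v j \<noteq> 0})"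
proof clarify
  fix p assume p: "p < r"
  let ?J = "{j. j < t \<and> v j \<noteq> 0}"
  obtain x y where sep: "separates u r p x y" using separating_pair_exists[OF ind p] .
  have "of_real (lam p) *s outer (u p) (u p) = contract (cps_sum r lam u) x y"
    unfolding contract_cps_sum
    by (subst sum_separates[OF sep p, of "\<lambda>m s. (of_real (lam m) * cnj s) *s outer (u m) (u m)"]) simp_all
  also have "\<dots> = (\<Sum>j\<in>?J. (of_real (mu j) * cnj (bdot (v j) x * bdot (v j) y)) *s outer (v j) (v j))"
    unfolding eq[symmetric] contract_cps_sum
    by (rule sum.mono_neutral_right) (auto simp: outer_def vec_eq_iff)
  also have "\<dots> \<in> vec.span ((\<lambda>j. outer (v j) (v j)) ` ?J)"
    by (intro vec.span_sum vec.span_scale vec.span_base) auto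
  finally have "inverse (of_real (lam p)) *s (of_real (lam p) *s outer (u p) (u p))
      \<in> vec.span ((\<lambda>j. outer (v j) (v j)) ` ?J)"
    by (rule vec.span_scale)
  with lam p show "outer (u p) (u p) \<in> vec.span ((\<lambda>j. outer (v j) (v j)) ` ?J)"
    by simp
qed

lemma cps_sum_length_ge:
  fixes u v :: "nat \<Rightarrow> complex ^ 'n"
  assumes "k_independent r u k" "r + 1 \<le> 2 * k" "\<forall>i<r. lam i \<noteq> 0"
    and "cps_sum t mu v = cps_sum r lam u"
  shows "r \<le> card {j. j < t \<and> v j \<noteq> 0}"
proof -
  let ?J = "{j. j < t \<and> v j \<noteq> 0}"
  note indep = outer_squares_independent[OF assms(1,2)]
  have "r = card ((\<lambda>m. outer (u m) (u m)) ` {..<r})"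
    using card_image[OF indep(2)] by simp
  also have "\<dots> \<le> card ((\<lambda>j. outer (v j) (v j)) ` ?J)"
    using vec.independent_span_bound[OF _ indep(1) cps_sum_outer_squares_in_span[OF assms]] by simp
  also have "\<dots> \<le> card ?J"
    by (rule card_image_le) simp
  finally show ?thesis .
qed

lemma rank_cps_cps_sum:
  fixes u :: "nat \<Rightarrow> complex ^ 'n"
  assumes "k_independent r u k" "r + 1 \<le> 2 * k" "\<forall>i<r. lam i \<noteq> 0"
  shows "rank_cps (cps_sum r lam u) = r"
  unfolding rank_cps_def
proof (rule Least_equality)
  fix t assume "\<exists>mu v. cps_sum r lam u = cps_sum t mu v"
  then obtain mu v where "cps_sum t mu v = cps_sum r lam u" by metis
  then have "r \<le> card {j. j < t \<and> v j \<noteq> 0}"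
    by (rule cps_sum_length_ge[OF assms])
  also have "\<dots> \<le> t"
    using card_mono[of "{..<t}" "{j. j < t \<and> v j \<noteq> 0}"] by auto
  finally show "r \<le> t" .
qed blast

lemma cps_sum_components_parallel:
  fixes u v :: "nat \<Rightarrow> complex ^ 'n"
  assumes ind: "k_independent r u k" "r + 2 \<le> 2 * k" and lam: "\<forall>i<r. lam i \<noteq> 0"
    and eq: "cps_sum r mu v = cps_sum r lam u" and j: "j < r"
  obtains p c where "p < r" "c \<noteq> 0" "v j = c *s u p"
proof -
  let ?U = "(\<lambda>m. outer (u m) (u m)) ` {..<r}"
  let ?V = "(\<lambda>j. outer (v j) (v j)) ` {..<r}"
  from ind have ind': "k_independent r u k" "r + 1 \<le> 2 * k" by simp_all
  note indep = outer_squares_independent[OF ind']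
  have nonzero: "{j. j < r \<and> v j \<noteq> 0} = {..<r}"
  proof (rule card_subset_eq)
    show sub: "{j. j < r \<and> v j \<noteq> 0} \<subseteq> {..<r}" by auto
    show "card {j. j < r \<and> v j \<noteq> 0} = card {..<r}"
      using cps_sum_length_ge[OF ind' lam eq] card_mono[OF finite_lessThan sub] by simp
  qed simp
  have "?U \<subseteq> vec.span ?V"
    using cps_sum_outer_squares_in_span[OF ind' lam eq] by (simp add: nonzero)
  moreover have "vec.dim (vec.span ?V) \<le> card ?U"
  proof -
    have "vec.dim (vec.span ?V) \<le> card ?V" by (rule vec.dim_le_card) auto
    also have "\<dots> \<le> card ?U"
      using card_image_le[of "{..<r}" "\<lambda>j. outer (v j) (v j)"] card_image[OF indep(2)] by simp
    finally show ?thesis .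
  qed
  ultimately have "vec.span ?V \<subseteq> vec.span ?U"
    by (rule vec.card_ge_dim_independent[OF _ indep(1)])
  moreover have "outer (v j) (v j) \<in> vec.span ?V"
    using j by (intro vec.span_base) simp
  ultimately obtain g where "outer (v j) (v j) = (\<Sum>w\<in>?U. g w *s w)"
    using vec.span_finite[of ?U] by auto
  also have "\<dots> = (\<Sum>p<r. g (outer (u p) (u p)) *s outer (u p) (u p))"
    by (simp add: sum.reindex[OF indep(2)])
  finally have "outer (v j) (v j) = (\<Sum>p<r. g (outer (u p) (u p)) *s outer (u p) (u p))" .
  moreover from nonzero j have "v j \<noteq> 0" by blast
  ultimately obtain p c where "p < r" "c \<noteq> 0" "v j = c *s u p"
    by (rule outer_square_parallel[OF ind])
  then show thesis by (rule that)
qed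

lemma cps_sum_weight_eq:
  fixes u v :: "nat \<Rightarrow> complex ^ 'n"
  assumes ind: "k_independent r u k" "r + 1 \<le> 2 * k"
    and eq: "cps_sum t mu v = cps_sum r lam u"
    and par: "\<forall>j<t. \<pi> j < r \<and> v j = c j *s u (\<pi> j)" and p: "p < r"
  shows "lam p = (\<Sum>j\<in>{j\<in>{..<t}. \<pi> j = p}. mu j * cmod (c j) ^ 4)"
proof -
  obtain x y where sep: "separates u r p x y" using separating_pair_exists[OF ind p] .
  have "(\<Sum>m<r. lam m * cmod (bdot (u m) x * bdot (u m) y) ^ 2) = lam p"
    by (subst sum_separates[OF sep p, of "\<lambda>m s. lam m * cmod s ^ 2"]) simp_all
  moreover have "(\<Sum>m<r. lam m * cmod (bdot (u m) x * bdot (u m) y) ^ 2) =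
      (\<Sum>j<t. mu j * cmod (bdot (v j) x * bdot (v j) y) ^ 2)"
    using arg_cong[OF eq, of "\<lambda>A. bdot (contract A x y) (outer x y)"]
    by (simp only: contract_cps_sum_value of_real_eq_iff)
  moreover have "\<dots> = (\<Sum>j<t. if \<pi> j = p then mu j * cmod (c j) ^ 4 else 0)"
  proof (rule sum.cong[OF refl])
    fix j assume "j \<in> {..<t}"
    with par have "\<pi> j < r" "bdot (v j) x * bdot (v j) y = c j ^ 2 * (bdot (u (\<pi> j)) x * bdot (u (\<pi> j)) y)"
      by (simp_all add: bdot_scale_left power2_eq_square)
    with sep show "mu j * cmod (bdot (v j) x * bdot (v j) y) ^ 2 = (if \<pi> j = p then mu j * cmod (c j) ^ 4 else 0)"
      by (simp add: separates_def norm_mult norm_power flip: power_mult)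
  qed
  ultimately show ?thesis
    unfolding sum.inter_filter[OF finite_lessThan] by simp
qed

lemma cps_sum_unique:
  fixes u v :: "nat \<Rightarrow> complex ^ 'n"
  assumes ind: "k_independent r u k" "r + 2 \<le> 2 * k" and lam: "\<forall>i<r. lam i \<noteq> 0"
    and eq: "cps_sum r mu v = cps_sum r lam u"
  obtains \<sigma> c where "\<sigma> permutes {..<r}"
    "\<forall>i<r. c i \<noteq> 0 \<and> v (\<sigma> i) = c i *s u i \<and> mu (\<sigma> i) * cmod (c i) ^ 4 = lam i"
proof -
  have "\<forall>j. \<exists>p c. j < r \<longrightarrow> p < r \<and> c \<noteq> 0 \<and> v j = c *s u p"
    using cps_sum_components_parallel[OF ind lam eq] by metis
  then obtain \<pi> c where par: "\<And>j. j < r \<Longrightarrow> \<pi> j < r \<and> c j \<noteq> 0 \<and> v j = c j *s u (\<pi> j)"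
    by metis
  from ind have ind': "k_independent r u k" "r + 1 \<le> 2 * k" by simp_all
  have weight: "lam i = (\<Sum>j\<in>{j\<in>{..<r}. \<pi> j = i}. mu j * cmod (c j) ^ 4)" if "i < r" for i
    using cps_sum_weight_eq[OF ind' eq _ that] par by blast
  define \<rho> where "\<rho> j = (if j < r then \<pi> j else j)" for j
  have "\<rho> ` {..<r} = {..<r}"
  proof
    show "\<rho> ` {..<r} \<subseteq> {..<r}" using par by (auto simp: \<rho>_def)
    show "{..<r} \<subseteq> \<rho> ` {..<r}"
    proof
      fix i assume i: "i \<in> {..<r}"
      have "{j\<in>{..<r}. \<pi> j = i} \<noteq> {}"
      proof
        assume empty: "{j\<in>{..<r}. \<pi> j = i} = {}"
        with weight[of i] i have "lam i = 0" by (metis lessThan_iff sum.empty)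
        with lam i show False by simp
      qed
      then show "i \<in> \<rho> ` {..<r}" by (force simp: \<rho>_def)
    qed
  qed
  then have "bij_betw \<rho> {..<r} {..<r}"
    by (simp add: bij_betw_def eq_card_imp_inj_on)
  then have \<rho>: "\<rho> permutes {..<r}"
    by (rule bij_imp_permutes) (simp add: \<rho>_def)
  define \<sigma> where "\<sigma> = inv \<rho>"
  have \<sigma>: "\<sigma> permutes {..<r}" unfolding \<sigma>_def by (rule permutes_inv[OF \<rho>])
  have \<sigma>_range: "\<sigma> i < r" "\<pi> (\<sigma> i) = i" if "i < r" for i
    using that permutes_in_image[OF \<sigma>, of i] permutes_inverses(1)[OF \<rho>, of i]
    by (auto simp: \<sigma>_def \<rho>_def)
  have "j = \<sigma> i" if "j < r" "\<pi> j = i" for i j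
    using that permutes_inv_eq[OF \<rho>, of i j] by (simp add: \<sigma>_def \<rho>_def eq_commute)
  with \<sigma>_range have fibre: "{j\<in>{..<r}. \<pi> j = i} = {\<sigma> i}" if "i < r" for i
    using that by auto
  show thesis
  proof (rule that[OF \<sigma>], intro allI impI conjI)
    fix i assume i: "i < r"
    show "c (\<sigma> i) \<noteq> 0" "v (\<sigma> i) = c (\<sigma> i) *s u i"
      using par[OF \<sigma>_range(1)[OF i]] \<sigma>_range(2)[OF i] by simp_all
    show "mu (\<sigma> i) * cmod (c (\<sigma> i)) ^ 4 = lam i"
      using weight[OF i] fibre[OF i] by simp
  qed
qed

theorem proposition3p2:
  fixes r :: nat and lam :: "nat \<Rightarrow> real" and u :: "nat \<Rightarrow> complex ^ 'n"
  assumes lam_nz: "\<forall>i<r. lam i \<noteq> 0"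
    and kr: "2 * kruskal_rank r u \<ge> r + 2"
  shows "cps_tensor (cps_sum r lam u)
     \<and> rank_cps (cps_sum r lam u) = r
     \<and> (\<forall>(mu :: nat \<Rightarrow> real) (v :: nat \<Rightarrow> complex ^ 'n).
          cps_sum r mu v = cps_sum r lam u \<longrightarrow>
          (\<exists>\<sigma> c. \<sigma> permutes {..<r} \<and>
             (\<forall>i<r. c i \<noteq> 0 \<and> v (\<sigma> i) = c i *s u i
                    \<and> mu (\<sigma> i) * (cmod (c i)) ^ 4 = lam i)))"
proof (intro conjI allI impI)
  let ?k = "kruskal_rank r u"
  have ind: "k_independent r u ?k" by (rule k_independent_kruskal_rank)
  show "cps_tensor (cps_sum r lam u)" by (rule cps_tensor_cps_sum)
  show "rank_cps (cps_sum r lam u) = r"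
    by (rule rank_cps_cps_sum[OF ind _ lam_nz]) (use kr in simp)
  fix mu :: "nat \<Rightarrow> real" and v :: "nat \<Rightarrow> complex ^ 'n"
  assume "cps_sum r mu v = cps_sum r lam u"
  then obtain \<sigma> c where "\<sigma> permutes {..<r}"
    "\<forall>i<r. c i \<noteq> 0 \<and> v (\<sigma> i) = c i *s u i \<and> mu (\<sigma> i) * cmod (c i) ^ 4 = lam i"
    by (rule cps_sum_unique[OF ind kr lam_nz])
  then show "\<exists>\<sigma> c. \<sigma> permutes {..<r} \<and>
             (\<forall>i<r. c i \<noteq> 0 \<and> v (\<sigma> i) = c i *s u i \<and> mu (\<sigma> i) * (cmod (c i)) ^ 4 = lam i)"
    by blast
qed

end
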